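(* Let $U\colon[0,1]^2\to[0,1]$ be a uninorm with neutral element $e\in(0,1)$. Define $U^*,U_*\colon[0,1]^2\to[0,1]$ by $U^*(x,y)=1$ if $\max(x,y)=1$, $U^*(x,y)=0$ if $\min(x,y)=0$ and $\max(x,y)<1$, and $U^*(x,y)=U(x,y)$ otherwise; and $U_*(x,y)=0$ if $\min(x,y)=0$, $U_*(x,y)=1$ if $\min(x,y)>0$ and $\max(x,y)=1$, and $U_*(x,y)=U(x,y)$ otherwise. Then $U^*$ and $U_*$ are both uninorms if and only if there are no $x_1,x_2\in(0,1)$ with $U(x_1,x_2)\in\{0,1\}$.
   Context: A uninorm is a binary operation on $[0,1]$ that is commutative, associative, non-decreasing in each variable and has a neutral element $e$. *)

theory Defs
  imports Main "HOL.Real"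
begin

definition uninorm :: "(real \<Rightarrow> real \<Rightarrow> real) \<Rightarrow> real \<Rightarrow> bool" where
  "uninorm U e \<longleftrightarrow>
     e \<in> {0..1} \<and>
     (\<forall>x\<in>{0..1}. \<forall>y\<in>{0..1}. U x y \<in> {0..1}) \<and>
     (\<forall>x\<in>{0..1}. \<forall>y\<in>{0..1}. U x y = U y x) \<and>
     (\<forall>x\<in>{0..1}. \<forall>y\<in>{0..1}. \<forall>z\<in>{0..1}. U (U x y) z = U x (U y z)) \<and>
     (\<forall>x\<in>{0..1}. \<forall>y\<in>{0..1}. \<forall>z\<in>{0..1}. x \<le> y \<longrightarrow> U x z \<le> U y z \<and> U z x \<le> U z y) \<and>
     (\<forall>x\<in>{0..1}. U e x = x \<and> U x e = x)"

definition upper_mod :: "(real \<Rightarrow> real \<Rightarrow> real) \<Rightarrow> real \<Rightarrow> real \<Rightarrow> real" where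
  "upper_mod U x y =
     (if max x y = 1 then 1
      else if min x y = 0 \<and> max x y < 1 then 0
      else U x y)"

definition lower_mod :: "(real \<Rightarrow> real \<Rightarrow> real) \<Rightarrow> real \<Rightarrow> real \<Rightarrow> real" where
  "lower_mod U x y =
     (if min x y = 0 then 0
      else if min x y > 0 \<and> max x y = 1 then 1
      else U x y)"

end

theory Submission
  imports Defs
begin

text \<open>
  If \<open>U\<close> maps the open square into \<open>(0, 1)\<close>, then \<open>U\<^sup>*\<close> is \<open>U\<close> on the interior,
  with \<open>1\<close> absorbing everywhere and \<open>0\<close> absorbing below \<open>1\<close>; each of these pieces is closed
  under the operation, so the uninorm axioms are checked piece by piece. Conversely, if
  \<open>U x y = 1\<close> for interior \<open>x, y\<close>, associativity of \<open>U\<^sup>*\<close> on \<open>(x, y, 0)\<close> fails.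
  The lower modification is the image of the upper one under the duality
  \<open>U \<mapsto> (\<lambda>x y. 1 - U (1 - x) (1 - y))\<close>, which preserves uninorms and swaps the
  roles of \<open>0\<close> and \<open>1\<close>; both directions for \<open>U\<^sub>*\<close> follow from those for \<open>U\<^sup>*\<close>.
\<close>

lemma uninormI:
  assumes "e \<in> {0..1}"
    and "\<And>x y. x \<in> {0..1} \<Longrightarrow> y \<in> {0..1} \<Longrightarrow> U x y \<in> {0..1}"
    and comm: "\<And>x y. x \<in> {0..1} \<Longrightarrow> y \<in> {0..1} \<Longrightarrow> U x y = U y x"
    and "\<And>x y z. x \<in> {0..1} \<Longrightarrow> y \<in> {0..1} \<Longrightarrow> z \<in> {0..1} \<Longrightarrow>
           U (U x y) z = U x (U y z)"
    and mono: "\<And>x y z. x \<in> {0..1} \<Longrightarrow> y \<in> {0..1} \<Longrightarrow> z \<in> {0..1} \<Longrightarrow> x \<le> y \<Longrightarrow>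
           U x z \<le> U y z"
    and "\<And>x. x \<in> {0..1} \<Longrightarrow> U e x = x"
  shows "uninorm U e"
proof -
  have "U z x \<le> U z y" if "x \<in> {0..1}" "y \<in> {0..1}" "z \<in> {0..1}" "x \<le> y" for x y z
    using mono[OF that] comm that by simp
  then show ?thesis
    unfolding uninorm_def using assms by simp
qed

context
  fixes U :: "real \<Rightarrow> real \<Rightarrow> real" and e :: real
  assumes uninorm: "uninorm U e"
begin

lemma uninorm_neutral_mem: "e \<in> {0..1}"
  and uninorm_mem: "x \<in> {0..1} \<Longrightarrow> y \<in> {0..1} \<Longrightarrow> U x y \<in> {0..1}"
  and uninorm_commute: "x \<in> {0..1} \<Longrightarrow> y \<in> {0..1} \<Longrightarrow> U x y = U y x"
  and uninorm_assoc: "x \<in> {0..1} \<Longrightarrow> y \<in> {0..1} \<Longrightarrow> z \<in> {0..1} \<Longrightarrow>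
         U (U x y) z = U x (U y z)"
  and uninorm_mono: "x \<in> {0..1} \<Longrightarrow> y \<in> {0..1} \<Longrightarrow> z \<in> {0..1} \<Longrightarrow> x \<le> y \<Longrightarrow>
         U x z \<le> U y z"
  and uninorm_neutral: "x \<in> {0..1} \<Longrightarrow> U e x = x"
  using uninorm unfolding uninorm_def by blast+

end

definition dual_op :: "(real \<Rightarrow> real \<Rightarrow> real) \<Rightarrow> real \<Rightarrow> real \<Rightarrow> real" where
  "dual_op U x y = 1 - U (1 - x) (1 - y)"

definition interior_closed :: "(real \<Rightarrow> real \<Rightarrow> real) \<Rightarrow> bool" where
  "interior_closed U \<longleftrightarrow> (\<forall>x\<in>{0<..<1}. \<forall>y\<in>{0<..<1}. U x y \<in> {0<..<1})"

lemma dual_op_dual_op [simp]: "dual_op (dual_op U) = U"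
  unfolding dual_op_def by (intro ext) simp

lemma lower_mod_eq_dual_op: "lower_mod U = dual_op (upper_mod (dual_op U))"
  by (intro ext) (auto simp: lower_mod_def upper_mod_def dual_op_def max_def min_def)

lemma interior_closedD:
  "interior_closed U \<Longrightarrow> x \<in> {0<..<1} \<Longrightarrow> y \<in> {0<..<1} \<Longrightarrow> U x y \<in> {0<..<1}"
  by (simp add: interior_closed_def)

lemma interior_closed_dual_op:
  assumes "interior_closed U"
  shows "interior_closed (dual_op U)"
  unfolding interior_closed_def
proof (intro ballI)
  fix x y :: real
  assume "x \<in> {0<..<1}" "y \<in> {0<..<1}"
  then have "U (1 - x) (1 - y) \<in> {0<..<1}"
    using interior_closedD[OF assms, of "1 - x" "1 - y"] by simp
  then show "dual_op U x y \<in> {0<..<1}"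
    by (simp add: dual_op_def)
qed

lemma uninorm_dual_op:
  assumes U: "uninorm U e"
  shows "uninorm (dual_op U) (1 - e)"
proof (rule uninormI)
  have reflect: "1 - x \<in> {0..1}" if "x \<in> {0..1}" for x :: real
    using that by simp
  show "1 - e \<in> {0..1}"
    using uninorm_neutral_mem[OF U] by simp
  fix x y z :: real
  assume x: "x \<in> {0..1}" and y: "y \<in> {0..1}"
  show "dual_op U x y \<in> {0..1}"
    using uninorm_mem[OF U reflect[OF x] reflect[OF y]] by (simp add: dual_op_def)
  show "dual_op U x y = dual_op U y x"
    using uninorm_commute[OF U reflect[OF x] reflect[OF y]] by (simp add: dual_op_def)
  show "dual_op U (1 - e) x = x"
    using uninorm_neutral[OF U reflect[OF x]] by (simp add: dual_op_def)
  assume z: "z \<in> {0..1}"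
  show "dual_op U (dual_op U x y) z = dual_op U x (dual_op U y z)"
    using uninorm_assoc[OF U reflect[OF x] reflect[OF y] reflect[OF z]] by (simp add: dual_op_def)
  show "dual_op U x z \<le> dual_op U y z" if "x \<le> y"
    using uninorm_mono[OF U reflect[OF y] reflect[OF x] reflect[OF z]] that
    by (simp add: dual_op_def)
qed

lemma upper_mod_one_left: "y \<le> 1 \<Longrightarrow> upper_mod U 1 y = 1"
  and upper_mod_one_right: "x \<le> 1 \<Longrightarrow> upper_mod U x 1 = 1"
  by (simp_all add: upper_mod_def max_def)

lemma upper_mod_zero_left: "0 \<le> y \<Longrightarrow> y < 1 \<Longrightarrow> upper_mod U 0 y = 0"
  and upper_mod_zero_right: "0 \<le> x \<Longrightarrow> x < 1 \<Longrightarrow> upper_mod U x 0 = 0"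
  by (simp_all add: upper_mod_def max_def min_def)

lemma upper_mod_interior:
  "x \<in> {0<..<1} \<Longrightarrow> y \<in> {0<..<1} \<Longrightarrow> upper_mod U x y = U x y"
  by (simp add: upper_mod_def max_def min_def)

lemmas upper_mod_simps =
  upper_mod_one_left upper_mod_one_right upper_mod_zero_left upper_mod_zero_right upper_mod_interior

lemma upper_mod_less_one:
  assumes "interior_closed U" "x \<in> {0..<1}" "y \<in> {0..<1}"
  shows "upper_mod U x y \<in> {0..<1}"
proof (cases "x = 0 \<or> y = 0")
  case True
  then show ?thesis using assms by (auto simp: upper_mod_simps)
next
  case False
  then show ?thesis
    using assms interior_closedD[OF assms(1), of x y] by (auto simp: upper_mod_interior)
qed

lemma upper_mod_mem_unit:
  assumes "interior_closed U" "x \<in> {0..1}" "y \<in> {0..1}"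
  shows "upper_mod U x y \<in> {0..1}"
proof (cases "x = 1 \<or> y = 1")
  case True
  then show ?thesis using assms by (auto simp: upper_mod_simps)
next
  case False
  then show ?thesis using assms upper_mod_less_one[OF assms(1), of x y] by auto
qed

lemma uninorm_upper_mod:
  assumes U: "uninorm U e" and e: "0 < e" "e < 1" and closed: "interior_closed U"
  shows "uninorm (upper_mod U) e"
proof (rule uninormI)
  show "e \<in> {0..1}" using e by simp
  fix x y z :: real
  assume x: "x \<in> {0..1}" and y: "y \<in> {0..1}"
  show "upper_mod U x y \<in> {0..1}"
    using closed x y by (rule upper_mod_mem_unit)
  show "upper_mod U x y = upper_mod U y x"
    using uninorm_commute[OF U x y] by (simp add: upper_mod_def max.commute min.commute)
  show "upper_mod U e x = x"
    using x e uninorm_neutral[OF U x] by (auto simp: upper_mod_def max_def min_def)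
  assume z: "z \<in> {0..1}"
  show "upper_mod U (upper_mod U x y) z = upper_mod U x (upper_mod U y z)"
  proof -
    have xy: "upper_mod U x y \<in> {0..1}" and yz: "upper_mod U y z \<in> {0..1}"
      using upper_mod_mem_unit[OF closed] x y z by auto
    consider "x = 1 \<or> y = 1 \<or> z = 1" | "x < 1" "y < 1" "z < 1" "x = 0 \<or> y = 0 \<or> z = 0"
      | "x \<in> {0<..<1}" "y \<in> {0<..<1}" "z \<in> {0<..<1}"
      using x y z by fastforce
    then show ?thesis
    proof cases
      case 1
      then show ?thesis using x y z xy yz by (auto simp: upper_mod_simps)
    next
      case 2
      then have "upper_mod U x y < 1" "upper_mod U y z < 1"
        using upper_mod_less_one[OF closed] x y z by auto
      with 2 show ?thesis using x y z xy yz by (auto simp: upper_mod_simps)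
    next
      case 3
      then have "U x y \<in> {0<..<1}" "U y z \<in> {0<..<1}"
        using interior_closedD[OF closed] by auto
      with 3 show ?thesis
        using uninorm_assoc[OF U x y z] by (simp only: upper_mod_interior)
    qed
  qed
  show "upper_mod U x z \<le> upper_mod U y z" if "x \<le> y"
  proof -
    consider "y = 1 \<or> z = 1" | "y < 1" "z < 1" "x = 0 \<or> z = 0"
      | "x \<in> {0<..<1}" "y \<in> {0<..<1}" "z \<in> {0<..<1}"
      using x y z \<open>x \<le> y\<close> by fastforce
    then show ?thesis
    proof cases
      case 1
      then show ?thesis
        using x y z upper_mod_mem_unit[OF closed x z] by (auto simp: upper_mod_simps)
    next
      case 2
      then show ?thesis
        using x y z \<open>x \<le> y\<close> upper_mod_mem_unit[OF closed y z] by (auto simp: upper_mod_simps)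
    next
      case 3
      then show ?thesis
        using uninorm_mono[OF U x y z \<open>x \<le> y\<close>] by (simp only: upper_mod_interior)
    qed
  qed
qed

lemma uninorm_lower_mod:
  assumes "uninorm U e" "0 < e" "e < 1" "interior_closed U"
  shows "uninorm (lower_mod U) e"
proof -
  have "uninorm (upper_mod (dual_op U)) (1 - e)"
    using assms by (simp add: uninorm_upper_mod uninorm_dual_op interior_closed_dual_op)
  then show ?thesis
    unfolding lower_mod_eq_dual_op using uninorm_dual_op by fastforce
qed

lemma uninorm_upper_mod_imp_neq_one:
  assumes "uninorm (upper_mod U) e" "x \<in> {0<..<1}" "y \<in> {0<..<1}"
  shows "U x y \<noteq> 1"
proof
  assume "U x y = 1"
  moreover have "upper_mod U (upper_mod U x y) 0 = upper_mod U x (upper_mod U y 0)"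
    using uninorm_assoc[OF assms(1), of x y 0] assms(2,3) by simp
  ultimately show False
    using assms(2,3) by (simp add: upper_mod_simps)
qed

lemma uninorm_lower_mod_imp_neq_zero:
  assumes "uninorm (lower_mod U) e" "x \<in> {0<..<1}" "y \<in> {0<..<1}"
  shows "U x y \<noteq> 0"
proof -
  have "uninorm (upper_mod (dual_op U)) (1 - e)"
    using uninorm_dual_op[OF assms(1)] by (simp add: lower_mod_eq_dual_op)
  then have "dual_op U (1 - x) (1 - y) \<noteq> 1"
    using assms(2,3) by (simp add: uninorm_upper_mod_imp_neq_one)
  then show ?thesis by (simp add: dual_op_def)
qed

theorem lemma2:
  fixes U :: "real \<Rightarrow> real \<Rightarrow> real" and e :: real
  assumes "uninorm U e" and "0 < e" and "e < 1"
  shows "((\<exists>e'. uninorm (upper_mod U) e') \<and> (\<exists>e'. uninorm (lower_mod U) e')) \<longleftrightarrow>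
         \<not> (\<exists>x1\<in>{0<..<1}. \<exists>x2\<in>{0<..<1}. U x1 x2 \<in> {0, 1})"
proof
  assume "(\<exists>e'. uninorm (upper_mod U) e') \<and> (\<exists>e'. uninorm (lower_mod U) e')"
  then show "\<not> (\<exists>x1\<in>{0<..<1}. \<exists>x2\<in>{0<..<1}. U x1 x2 \<in> {0, 1})"
    using uninorm_upper_mod_imp_neq_one uninorm_lower_mod_imp_neq_zero by blast
next
  assume "\<not> (\<exists>x1\<in>{0<..<1}. \<exists>x2\<in>{0<..<1}. U x1 x2 \<in> {0, 1})"
  moreover have "U x y \<in> {0..1}" if "x \<in> {0<..<1}" "y \<in> {0<..<1}" for x y
    using uninorm_mem[OF assms(1), of x y] that by simp
  ultimately have "interior_closed U"
    unfolding interior_closed_def by fastforce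
  then show "(\<exists>e'. uninorm (upper_mod U) e') \<and> (\<exists>e'. uninorm (lower_mod U) e')"
    using assms uninorm_upper_mod uninorm_lower_mod by blast
qed

end
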